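(* For monotone graph classes $\mathcal G_1$ and $\mathcal G_2$, the following are equivalent: (1) $\mathcal G_1\boxtimes\mathcal G_2$ has bounded pathwidth; (2) $\mathcal G_1\square\mathcal G_2$ has bounded pathwidth; (3) both $\mathcal G_1$ and $\mathcal G_2$ have bounded pathwidth, and $\tilde{\mathsf v}(\mathcal G_1)$ or $\tilde{\mathsf v}(\mathcal G_2)$ is bounded.
   Context: A graph class is a set of graphs closed under isomorphism containing a graph with non-empty vertex set; it is monotone if closed under taking subgraphs. For a graph parameter $\beta$ and class $\mathcal G$, $\beta(\mathcal G):=\sup\{\beta(G):G\in\mathcal G\}$, and $\beta(\mathcal G)$ is bounded if this supremum is finite. $\tilde{\mathsf v}(G)$ is the maximum number of vertices of a connected component of $G$. For a product $\bullet$, $\mathcal G_1\bullet\mathcal G_2:=\{G_1\bullet G_2: G_1\in\mathcal G_1, G_2\in\mathcal G_2\}$. The cartesian product $G_1 \square G_2$ has vertex set $V(G_1)\times V(G_2)$, with $(a,v)(b,u)$ an edge iff either $ab\in E(G_1)$ and $u=v$, or $uv\in E(G_2)$ and $a=b$; the strong product $G_1\boxtimes G_2$ has the same vertex set, with distinct vertices $(a,v),(b,u)$ adjacent iff ($a=b$ or $ab\in E(G_1)$) and ($u=v$ or $uv\in E(G_2)$). *)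

theory Defs
  imports Main
begin

record 'a graph =
  verts :: "'a set"
  edges :: "'a set set"

definition wf_graph :: "('a, 'b) graph_scheme \<Rightarrow> bool" where
  "wf_graph G \<longleftrightarrow> finite (verts G) \<and>
     (\<forall>e\<in>edges G. e \<subseteq> verts G \<and> card e = 2)"

definition subgraph :: "'a graph \<Rightarrow> 'a graph \<Rightarrow> bool" where
  "subgraph H G \<longleftrightarrow> wf_graph H \<and> verts H \<subseteq> verts G \<and> edges H \<subseteq> edges G"

definition graph_iso :: "'a graph \<Rightarrow> 'b graph \<Rightarrow> bool" where
  "graph_iso G H \<longleftrightarrow> (\<exists>f. bij_betw f (verts G) (verts H) \<and>
     (\<forall>x\<in>verts G. \<forall>y\<in>verts G. ({x, y} \<in> edges G \<longleftrightarrow> {f x, f y} \<in> edges H)))"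

text \<open>Graph classes: vertices are drawn from the countably infinite type nat, so
  "closed under isomorphism" is meaningful (every finite graph has copies here).\<close>
definition graph_class :: "nat graph set \<Rightarrow> bool" where
  "graph_class C \<longleftrightarrow> (\<forall>G\<in>C. wf_graph G) \<and>
     (\<forall>G\<in>C. \<forall>H. wf_graph H \<and> graph_iso G H \<longrightarrow> H \<in> C) \<and>
     (\<exists>G\<in>C. verts G \<noteq> {})"

definition monotone_class :: "nat graph set \<Rightarrow> bool" where
  "monotone_class C \<longleftrightarrow> graph_class C \<and> (\<forall>G\<in>C. \<forall>H. subgraph H G \<longrightarrow> H \<in> C)"

definition path_decomp :: "'a graph \<Rightarrow> 'a set list \<Rightarrow> bool" where
  "path_decomp G bs \<longleftrightarrow> bs \<noteq> [] \<and>
     (\<forall>B\<in>set bs. B \<subseteq> verts G) \<and>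
     (\<forall>v\<in>verts G. \<exists>B\<in>set bs. v \<in> B) \<and>
     (\<forall>e\<in>edges G. \<exists>B\<in>set bs. e \<subseteq> B) \<and>
     (\<forall>v i j k. i \<le> j \<and> j \<le> k \<and> k < length bs \<and> v \<in> bs ! i \<and> v \<in> bs ! k \<longrightarrow> v \<in> bs ! j)"

definition decomp_width :: "'a set list \<Rightarrow> nat" where
  "decomp_width bs = Max ((\<lambda>B. card B - 1) ` set bs)"

definition pathwidth :: "'a graph \<Rightarrow> nat" where
  "pathwidth G = (LEAST k. \<exists>bs. path_decomp G bs \<and> decomp_width bs = k)"

definition bounded_pathwidth :: "'a graph set \<Rightarrow> bool" where
  "bounded_pathwidth C \<longleftrightarrow> (\<exists>k. \<forall>G\<in>C. pathwidth G \<le> k)"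

definition adj :: "'a graph \<Rightarrow> 'a \<Rightarrow> 'a \<Rightarrow> bool" where
  "adj G x y \<longleftrightarrow> {x, y} \<in> edges G"

definition component :: "'a graph \<Rightarrow> 'a \<Rightarrow> 'a set" where
  "component G v = {u \<in> verts G. (adj G)\<^sup>*\<^sup>* v u}"

definition max_comp_size :: "'a graph \<Rightarrow> nat" where
  "max_comp_size G = Max (insert 0 ((\<lambda>v. card (component G v)) ` verts G))"

definition bounded_comp_size :: "'a graph set \<Rightarrow> bool" where
  "bounded_comp_size C \<longleftrightarrow> (\<exists>k. \<forall>G\<in>C. max_comp_size G \<le> k)"

definition cartesian_prod :: "'a graph \<Rightarrow> 'b graph \<Rightarrow> ('a \<times> 'b) graph" where
  "cartesian_prod G1 G2 = \<lparr> verts = verts G1 \<times> verts G2,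
     edges = {{(a, v), (b, u)} | a b u v. a \<in> verts G1 \<and> b \<in> verts G1 \<and>
                 u \<in> verts G2 \<and> v \<in> verts G2 \<and>
                 (({a, b} \<in> edges G1 \<and> u = v) \<or> ({u, v} \<in> edges G2 \<and> a = b))} \<rparr>"

definition strong_prod :: "'a graph \<Rightarrow> 'b graph \<Rightarrow> ('a \<times> 'b) graph" where
  "strong_prod G1 G2 = \<lparr> verts = verts G1 \<times> verts G2,
     edges = {{(a, v), (b, u)} | a b u v. a \<in> verts G1 \<and> b \<in> verts G1 \<and>
                 u \<in> verts G2 \<and> v \<in> verts G2 \<and> (a, v) \<noteq> (b, u) \<and>
                 (a = b \<or> {a, b} \<in> edges G1) \<and> (u = v \<or> {u, v} \<in> edges G2)} \<rparr>"

definition class_prod ::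
  "('a graph \<Rightarrow> 'b graph \<Rightarrow> 'c graph) \<Rightarrow> 'a graph set \<Rightarrow> 'b graph set \<Rightarrow> 'c graph set" where
  "class_prod p C1 C2 = {p G1 G2 | G1 G2. G1 \<in> C1 \<and> G2 \<in> C2}"

end

theory Submission
  imports Defs "HOL-Library.Disjoint_Sets"
begin

text \<open>
  (1) implies (2) because G1 \<box> G2 is a spanning subgraph of G1 \<boxtimes> G2.
  (2) implies (3): each factor embeds into the cartesian product (fix a vertex of the other
  factor), and if S1, S2 are components of G1, G2, the rows {x} \<times> S2 and the columns
  S1 \<times> {y} are connected and every row meets every column.  In a path decomposition,
  the first bag whose prefix contains a whole row (say) must meet every column, so some bag
  has at least min |S1| |S2| vertices; hence components cannot be large in both classes.
  (3) implies (1): if every component of G2 has at most c vertices, then listing, for one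
  component K of G2 after the other, the bags B \<times> K of an optimal path decomposition
  of G1 gives a path decomposition of G1 \<boxtimes> G2 with bags of size at most
  (pw G1 + 1) c.
\<close>

lemma wf_graph_finite: "wf_graph G \<Longrightarrow> finite (verts G)"
  unfolding wf_graph_def by blast

lemma wf_graph_edge_subset: "wf_graph G \<Longrightarrow> e \<in> edges G \<Longrightarrow> e \<subseteq> verts G"
  unfolding wf_graph_def by blast

lemma wf_graph_edgeE:
  assumes "wf_graph G" "e \<in> edges G"
  obtains a b where "e = {a, b}" "a \<noteq> b" "a \<in> verts G" "b \<in> verts G"
proof -
  obtain a b where "e = {a, b}" "a \<noteq> b"
    using assms unfolding wf_graph_def by (metis card_2_iff)
  with that wf_graph_edge_subset[OF assms] show thesis by blast
qed

lemma path_decomp_nonempty: "path_decomp G bs \<Longrightarrow> bs \<noteq> []"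
  unfolding path_decomp_def by simp

lemma path_decomp_bag_subset: "path_decomp G bs \<Longrightarrow> B \<in> set bs \<Longrightarrow> B \<subseteq> verts G"
  unfolding path_decomp_def by simp

lemma path_decomp_covers_vertex:
  "path_decomp G bs \<Longrightarrow> v \<in> verts G \<Longrightarrow> \<exists>B\<in>set bs. v \<in> B"
  unfolding path_decomp_def by simp

lemma path_decomp_covers_edge:
  "path_decomp G bs \<Longrightarrow> e \<in> edges G \<Longrightarrow> \<exists>B\<in>set bs. e \<subseteq> B"
  unfolding path_decomp_def by simp

lemma path_decomp_interval:
  "path_decomp G bs \<Longrightarrow> i \<le> j \<Longrightarrow> j \<le> k \<Longrightarrow> k < length bs \<Longrightarrow>
     v \<in> bs ! i \<Longrightarrow> v \<in> bs ! k \<Longrightarrow> v \<in> bs ! j"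
  unfolding path_decomp_def by blast

lemma path_decomp_bag_finite:
  "wf_graph G \<Longrightarrow> path_decomp G bs \<Longrightarrow> B \<in> set bs \<Longrightarrow> finite B"
  by (meson finite_subset path_decomp_bag_subset wf_graph_finite)

lemma card_bag_le_decomp_width: "B \<in> set bs \<Longrightarrow> card B \<le> decomp_width bs + 1"
proof -
  assume "B \<in> set bs"
  then have "card B - 1 \<le> decomp_width bs"
    unfolding decomp_width_def by (intro Max_ge) auto
  then show ?thesis by linarith
qed

lemma decomp_width_le:
  assumes "bs \<noteq> []" and "\<And>B. B \<in> set bs \<Longrightarrow> card B \<le> k + 1"
  shows "decomp_width bs \<le> k"
  unfolding decomp_width_def using assms by (intro Max.boundedI) force+

lemma pathwidth_le: "path_decomp G bs \<Longrightarrow> pathwidth G \<le> decomp_width bs"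
  unfolding pathwidth_def by (rule Least_le) blast

lemma pathwidth_attained:
  assumes "wf_graph G"
  obtains bs where "path_decomp G bs" "decomp_width bs = pathwidth G"
proof -
  have "path_decomp G [verts G]"
    using assms unfolding path_decomp_def wf_graph_def by auto
  then have "\<exists>bs. path_decomp G bs \<and> decomp_width bs = pathwidth G"
    unfolding pathwidth_def by - (rule LeastI_ex, blast)
  with that show thesis by blast
qed

lemma pathwidth_mono_embedding:
  assumes G: "wf_graph G" and H: "wf_graph H"
    and inj: "inj_on f (verts G)" and verts: "f ` verts G \<subseteq> verts H"
    and edges: "\<And>e. e \<in> edges G \<Longrightarrow> f ` e \<in> edges H"
  shows "pathwidth G \<le> pathwidth H"
proof -
  obtain bs where bs: "path_decomp H bs" "decomp_width bs = pathwidth H"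
    using pathwidth_attained[OF H] .
  define bs' where "bs' = map (\<lambda>B. {x \<in> verts G. f x \<in> B}) bs"
  have "path_decomp G bs'"
    unfolding path_decomp_def
  proof (intro conjI allI ballI impI)
    show "bs' \<noteq> []" using path_decomp_nonempty[OF bs(1)] by (simp add: bs'_def)
  next
    fix v assume "v \<in> verts G"
    then obtain B where "B \<in> set bs" "f v \<in> B"
      using path_decomp_covers_vertex[OF bs(1), of "f v"] verts by blast
    with \<open>v \<in> verts G\<close> show "\<exists>B\<in>set bs'. v \<in> B" by (auto simp: bs'_def)
  next
    fix e assume e: "e \<in> edges G"
    then obtain B where "B \<in> set bs" "f ` e \<subseteq> B"
      using path_decomp_covers_edge[OF bs(1) edges] by blast
    with wf_graph_edge_subset[OF G e] show "\<exists>B\<in>set bs'. e \<subseteq> B"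
      by (auto simp: bs'_def)
  next
    fix v i j k assume ijk: "i \<le> j \<and> j \<le> k \<and> k < length bs' \<and> v \<in> bs' ! i \<and> v \<in> bs' ! k"
    then have "i < length bs" "j < length bs" "k < length bs"
      by (simp_all add: bs'_def)
    with ijk have "v \<in> verts G" "f v \<in> bs ! i" "f v \<in> bs ! k"
      by (simp_all add: bs'_def)
    with ijk show "v \<in> bs' ! j"
      using path_decomp_interval[OF bs(1), of i j k "f v"] by (simp add: bs'_def)
  qed (auto simp: bs'_def)
  moreover have "decomp_width bs' \<le> decomp_width bs"
  proof (rule decomp_width_le)
    show "bs' \<noteq> []" using path_decomp_nonempty[OF bs(1)] by (simp add: bs'_def)
  next
    fix B' assume "B' \<in> set bs'"
    then obtain B where B: "B \<in> set bs" "B' = {x \<in> verts G. f x \<in> B}"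
      by (auto simp: bs'_def)
    have "card B' \<le> card B"
      using B inj path_decomp_bag_finite[OF H bs(1) B(1)]
      by (auto intro!: card_inj_on_le[of f] intro: inj_on_subset)
    then show "card B' \<le> decomp_width bs + 1"
      using card_bag_le_decomp_width[OF B(1)] by linarith
  qed
  ultimately show ?thesis
    using pathwidth_le bs(2) by (metis le_trans)
qed

lemma cartesian_prod_edgeI:
  assumes "a \<in> verts G1" "b \<in> verts G1" "u \<in> verts G2" "v \<in> verts G2"
    and "({a, b} \<in> edges G1 \<and> u = v) \<or> ({u, v} \<in> edges G2 \<and> a = b)"
  shows "{(a, v), (b, u)} \<in> edges (cartesian_prod G1 G2)"
  unfolding cartesian_prod_def using assms by (simp only: graph.select_convs) blast

lemma cartesian_prod_edgeE:
  assumes "e \<in> edges (cartesian_prod G1 G2)"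
  obtains a b u v where "e = {(a, v), (b, u)}" "a \<in> verts G1" "b \<in> verts G1"
    "u \<in> verts G2" "v \<in> verts G2" "({a, b} \<in> edges G1 \<and> u = v) \<or> ({u, v} \<in> edges G2 \<and> a = b)"
  using assms unfolding cartesian_prod_def by auto

lemma strong_prod_edgeI:
  assumes "a \<in> verts G1" "b \<in> verts G1" "u \<in> verts G2" "v \<in> verts G2" "(a, v) \<noteq> (b, u)"
    and "a = b \<or> {a, b} \<in> edges G1" "u = v \<or> {u, v} \<in> edges G2"
  shows "{(a, v), (b, u)} \<in> edges (strong_prod G1 G2)"
  unfolding strong_prod_def using assms by (simp only: graph.select_convs) blast

lemma strong_prod_edgeE:
  assumes "e \<in> edges (strong_prod G1 G2)"
  obtains a b u v where "e = {(a, v), (b, u)}" "a \<in> verts G1" "b \<in> verts G1"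
    "u \<in> verts G2" "v \<in> verts G2" "(a, v) \<noteq> (b, u)"
    "a = b \<or> {a, b} \<in> edges G1" "u = v \<or> {u, v} \<in> edges G2"
  using assms unfolding strong_prod_def by auto

lemma cartesian_prod_edge_fst:
  assumes "wf_graph G1" "{a, b} \<in> edges G1" "v \<in> verts G2"
  shows "{(a, v), (b, v)} \<in> edges (cartesian_prod G1 G2)"
  using assms wf_graph_edge_subset[OF assms(1,2)] by (intro cartesian_prod_edgeI) auto

lemma cartesian_prod_edge_snd:
  assumes "wf_graph G2" "{u, v} \<in> edges G2" "a \<in> verts G1"
  shows "{(a, u), (a, v)} \<in> edges (cartesian_prod G1 G2)"
  using assms wf_graph_edge_subset[OF assms(1,2)] cartesian_prod_edgeI[of a G1 a v G2 u]
  by (auto simp: insert_commute)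

lemma cartesian_prod_edge_distinct:
  assumes "wf_graph G1" "wf_graph G2" "{(a, v), (b, u)} \<in> edges (cartesian_prod G1 G2)"
  shows "(a, v) \<noteq> (b, u)"
  using assms(3)
proof (cases rule: cartesian_prod_edgeE)
  case (1 a' b' u' v')
  have "card {a', b'} = 2 \<or> card {u', v'} = 2"
    using 1(6) assms(1,2) unfolding wf_graph_def by blast
  with 1 show ?thesis by (auto simp: doubleton_eq_iff)
qed

lemma edges_cartesian_prod_subset_strong_prod:
  assumes "wf_graph G1" "wf_graph G2"
  shows "edges (cartesian_prod G1 G2) \<subseteq> edges (strong_prod G1 G2)"
proof
  fix e assume e: "e \<in> edges (cartesian_prod G1 G2)"
  then obtain a b u v where "e = {(a, v), (b, u)}" "a \<in> verts G1" "b \<in> verts G1"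
    "u \<in> verts G2" "v \<in> verts G2" "({a, b} \<in> edges G1 \<and> u = v) \<or> ({u, v} \<in> edges G2 \<and> a = b)"
    by (rule cartesian_prod_edgeE)
  moreover have "(a, v) \<noteq> (b, u)"
    using cartesian_prod_edge_distinct[OF assms] e \<open>e = {(a, v), (b, u)}\<close> by blast
  ultimately show "e \<in> edges (strong_prod G1 G2)"
    by (auto intro: strong_prod_edgeI)
qed

lemma wf_graph_strong_prod:
  assumes "wf_graph G1" "wf_graph G2"
  shows "wf_graph (strong_prod G1 G2)"
  unfolding wf_graph_def
proof (intro conjI ballI)
  show "finite (verts (strong_prod G1 G2))"
    using assms by (simp add: strong_prod_def wf_graph_finite)
next
  fix e assume "e \<in> edges (strong_prod G1 G2)"
  then show "e \<subseteq> verts (strong_prod G1 G2)" "card e = 2"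
    by (cases rule: strong_prod_edgeE; simp add: strong_prod_def)+
qed

lemma wf_graph_cartesian_prod:
  assumes "wf_graph G1" "wf_graph G2"
  shows "wf_graph (cartesian_prod G1 G2)"
proof -
  have "edges (cartesian_prod G1 G2) \<subseteq> edges (strong_prod G1 G2)"
    by (rule edges_cartesian_prod_subset_strong_prod[OF assms])
  moreover have "verts (cartesian_prod G1 G2) = verts (strong_prod G1 G2)"
    by (simp add: cartesian_prod_def strong_prod_def)
  ultimately show ?thesis
    using wf_graph_strong_prod[OF assms] unfolding wf_graph_def by (metis subsetD)
qed

lemma strong_prod_swap_edge:
  assumes "e \<in> edges (strong_prod G1 G2)"
  shows "prod.swap ` e \<in> edges (strong_prod G2 G1)"
  using assms
proof (cases rule: strong_prod_edgeE)
  case (1 a b u v)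
  then have "{(v, a), (u, b)} \<in> edges (strong_prod G2 G1)"
    by (intro strong_prod_edgeI) (auto simp: insert_commute)
  with 1(1) show ?thesis by simp
qed

lemma pathwidth_strong_prod_le_swap:
  assumes "wf_graph G1" "wf_graph G2"
  shows "pathwidth (strong_prod G1 G2) \<le> pathwidth (strong_prod G2 G1)"
  using assms
  by (intro pathwidth_mono_embedding[where f = prod.swap] wf_graph_strong_prod strong_prod_swap_edge)
     (auto simp: strong_prod_def)

lemma pathwidth_strong_prod_commute:
  assumes "wf_graph G1" "wf_graph G2"
  shows "pathwidth (strong_prod G1 G2) = pathwidth (strong_prod G2 G1)"
  using pathwidth_strong_prod_le_swap[OF assms] pathwidth_strong_prod_le_swap[OF assms(2,1)]
  by (rule antisym)

lemma pathwidth_cartesian_prod_le_strong_prod: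
  assumes "wf_graph G1" "wf_graph G2"
  shows "pathwidth (cartesian_prod G1 G2) \<le> pathwidth (strong_prod G1 G2)"
proof (rule pathwidth_mono_embedding[where f = id])
  show "id ` verts (cartesian_prod G1 G2) \<subseteq> verts (strong_prod G1 G2)"
    by (simp add: cartesian_prod_def strong_prod_def)
qed (use assms edges_cartesian_prod_subset_strong_prod[OF assms] wf_graph_cartesian_prod[OF assms]
       wf_graph_strong_prod[OF assms] in auto)

lemma pathwidth_le_cartesian_prod_left:
  assumes "wf_graph G1" "wf_graph G2" "v \<in> verts G2"
  shows "pathwidth G1 \<le> pathwidth (cartesian_prod G1 G2)"
proof (rule pathwidth_mono_embedding[where f = "\<lambda>x. (x, v)"])
  fix e assume "e \<in> edges G1"
  with assms(1) obtain a b where "e = {a, b}" "{a, b} \<in> edges G1"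
    by (metis wf_graph_edgeE)
  then show "(\<lambda>x. (x, v)) ` e \<in> edges (cartesian_prod G1 G2)"
    using cartesian_prod_edge_fst[OF assms(1) _ assms(3)] by simp
next
  show "(\<lambda>x. (x, v)) ` verts G1 \<subseteq> verts (cartesian_prod G1 G2)"
    using assms(3) by (auto simp: cartesian_prod_def)
qed (use assms in \<open>auto simp: wf_graph_cartesian_prod inj_on_def\<close>)

lemma pathwidth_le_cartesian_prod_right:
  assumes "wf_graph G1" "wf_graph G2" "v \<in> verts G1"
  shows "pathwidth G2 \<le> pathwidth (cartesian_prod G1 G2)"
proof (rule pathwidth_mono_embedding[where f = "\<lambda>x. (v, x)"])
  fix e assume "e \<in> edges G2"
  with assms(2) obtain a b where "e = {a, b}" "{a, b} \<in> edges G2"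
    by (metis wf_graph_edgeE)
  then show "(\<lambda>x. (v, x)) ` e \<in> edges (cartesian_prod G1 G2)"
    using cartesian_prod_edge_snd[OF assms(2) _ assms(3)] by simp
next
  show "(\<lambda>x. (v, x)) ` verts G2 \<subseteq> verts (cartesian_prod G1 G2)"
    using assms(3) by (auto simp: cartesian_prod_def)
qed (use assms in \<open>auto simp: wf_graph_cartesian_prod inj_on_def\<close>)

lemma in_component_self: "v \<in> verts G \<Longrightarrow> v \<in> component G v"
  unfolding component_def by simp

lemma component_subset: "component G v \<subseteq> verts G"
  unfolding component_def by blast

lemma adj_rtranclp_sym: "(adj G)\<^sup>*\<^sup>* x y \<Longrightarrow> (adj G)\<^sup>*\<^sup>* y x"
  by (rule symp_rtranclp[THEN sympD]) (auto simp: symp_def adj_def insert_commute)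

lemma component_eq:
  assumes "z \<in> component G v" "z \<in> component G w"
  shows "component G v = component G w"
proof -
  have "(adj G)\<^sup>*\<^sup>* v w" "(adj G)\<^sup>*\<^sup>* w v"
    using assms unfolding component_def by (auto intro: rtranclp_trans adj_rtranclp_sym)
  then show ?thesis
    unfolding component_def by (auto intro: rtranclp_trans)
qed

lemma component_edge_closed:
  assumes "wf_graph G" "{u, w} \<in> edges G" "u \<in> component G v"
  shows "w \<in> component G v"
proof -
  have "(adj G)\<^sup>*\<^sup>* v w"
    using assms(2,3) unfolding component_def adj_def by (blast intro: rtranclp.rtrancl_into_rtrancl)
  with wf_graph_edge_subset[OF assms(1,2)] show ?thesis
    unfolding component_def by simp
qed

lemma max_comp_size_le_iff:
  assumes "wf_graph G"
  shows "max_comp_size G \<le> k \<longleftrightarrow> (\<forall>v\<in>verts G. card (component G v) \<le> k)"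
  using wf_graph_finite[OF assms] unfolding max_comp_size_def by simp

definition connected_set :: "'a graph \<Rightarrow> 'a set \<Rightarrow> bool" where
  "connected_set G S \<longleftrightarrow> (\<exists>c. \<forall>z\<in>S. (\<lambda>a b. a \<in> S \<and> b \<in> S \<and> {a, b} \<in> edges G)\<^sup>*\<^sup>* c z)"

lemma connected_set_component:
  assumes "wf_graph G"
  shows "connected_set G (component G v)"
proof -
  let ?R = "\<lambda>a b. a \<in> component G v \<and> b \<in> component G v \<and> {a, b} \<in> edges G"
  have walk: "?R\<^sup>*\<^sup>* v z" if "(adj G)\<^sup>*\<^sup>* v z" for z
    using that
  proof (induction rule: rtranclp_induct)
    case (step y z)
    have edge: "{y, z} \<in> edges G"
      using step.hyps(2) by (simp add: adj_def)
    have "(adj G)\<^sup>*\<^sup>* v z"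
      using step.hyps by (rule rtranclp.rtrancl_into_rtrancl)
    with step.hyps(1) wf_graph_edge_subset[OF assms edge]
    have "y \<in> component G v" "z \<in> component G v"
      unfolding component_def by simp_all
    with edge have "?R y z" by simp
    with step.IH show ?case by (rule rtranclp.rtrancl_into_rtrancl)
  qed simp
  have "\<forall>z\<in>component G v. ?R\<^sup>*\<^sup>* v z"
    using walk by (simp add: component_def)
  then show ?thesis
    unfolding connected_set_def by (rule exI)
qed

lemma connected_set_image:
  assumes "connected_set G S"
    and "\<And>a b. a \<in> S \<Longrightarrow> b \<in> S \<Longrightarrow> {a, b} \<in> edges G \<Longrightarrow> {f a, f b} \<in> edges H"
  shows "connected_set H (f ` S)"
proof -
  let ?R = "\<lambda>a b. a \<in> S \<and> b \<in> S \<and> {a, b} \<in> edges G"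
  let ?R' = "\<lambda>a b. a \<in> f ` S \<and> b \<in> f ` S \<and> {a, b} \<in> edges H"
  obtain c where c: "\<And>x. x \<in> S \<Longrightarrow> ?R\<^sup>*\<^sup>* c x"
    using assms(1) unfolding connected_set_def by blast
  have walk: "?R'\<^sup>*\<^sup>* (f c) (f x)" if "?R\<^sup>*\<^sup>* c x" for x
    using that
  proof (induction rule: rtranclp_induct)
    case (step y z)
    then have "?R' (f y) (f z)"
      using assms(2) by simp
    with step.IH show ?case
      by (rule rtranclp.rtrancl_into_rtrancl)
  qed simp
  have "?R'\<^sup>*\<^sup>* (f c) z" if "z \<in> f ` S" for z
    using that c walk by blast
  then show ?thesis
    unfolding connected_set_def by blast
qed

lemma connected_set_cartesian_prod_column:
  assumes "wf_graph G1" "y \<in> verts G2"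
  shows "connected_set (cartesian_prod G1 G2) (component G1 v \<times> {y})"
proof -
  have "connected_set (cartesian_prod G1 G2) ((\<lambda>x. (x, y)) ` component G1 v)"
    by (rule connected_set_image[OF connected_set_component[OF assms(1)]])
       (rule cartesian_prod_edge_fst[OF assms(1) _ assms(2)])
  moreover have "(\<lambda>x. (x, y)) ` component G1 v = component G1 v \<times> {y}" by auto
  ultimately show ?thesis by simp
qed

lemma connected_set_cartesian_prod_row:
  assumes "wf_graph G2" "x \<in> verts G1"
  shows "connected_set (cartesian_prod G1 G2) ({x} \<times> component G2 v)"
proof -
  have "connected_set (cartesian_prod G1 G2) ((\<lambda>y. (x, y)) ` component G2 v)"
    by (rule connected_set_image[OF connected_set_component[OF assms(1)]])
       (rule cartesian_prod_edge_snd[OF assms(1) _ assms(2)])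
  moreover have "(\<lambda>y. (x, y)) ` component G2 v = {x} \<times> component G2 v" by auto
  ultimately show ?thesis by simp
qed

subsection \<open>Separation in path decompositions\<close>

definition bags_upto :: "'a set list \<Rightarrow> nat \<Rightarrow> 'a set" where
  "bags_upto bs i = \<Union>{bs ! j | j. j \<le> i \<and> j < length bs}"

lemma mem_bags_upto: "x \<in> bags_upto bs i \<longleftrightarrow> (\<exists>j\<le>i. j < length bs \<and> x \<in> bs ! j)"
  unfolding bags_upto_def by blast

lemma bags_upto_0: "bags_upto bs 0 \<subseteq> bs ! 0"
  unfolding mem_bags_upto subset_iff by simp

lemma bags_upto_diff_bag:
  assumes "0 < i" shows "bags_upto bs i - bs ! i \<subseteq> bags_upto bs (i - 1)"
proof
  fix x assume x: "x \<in> bags_upto bs i - bs ! i"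
  then obtain j where "j \<le> i" "j < length bs" "x \<in> bs ! j"
    unfolding Diff_iff mem_bags_upto by blast
  moreover from x \<open>x \<in> bs ! j\<close> have "j \<noteq> i" by blast
  ultimately show "x \<in> bags_upto bs (i - 1)"
    unfolding mem_bags_upto by (intro exI[of _ j]) simp
qed

lemma verts_subset_bags_upto_last:
  assumes "path_decomp H bs"
  shows "verts H \<subseteq> bags_upto bs (length bs - 1)"
proof
  fix x assume "x \<in> verts H"
  then obtain B where "B \<in> set bs" "x \<in> B"
    using path_decomp_covers_vertex[OF assms] by blast
  then obtain j where "j < length bs" "x \<in> bs ! j"
    by (auto simp: in_set_conv_nth)
  then show "x \<in> bags_upto bs (length bs - 1)"
    unfolding mem_bags_upto by (intro exI[of _ j]) simp
qed

lemma bags_upto_edge_avoiding_bag: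
  assumes pd: "path_decomp H bs" and i: "i < length bs" and e: "{a, b} \<in> edges H"
    and "a \<notin> bs ! i" "b \<notin> bs ! i"
  shows "a \<in> bags_upto bs i \<longleftrightarrow> b \<in> bags_upto bs i"
proof -
  obtain j where j: "j < length bs" "{a, b} \<subseteq> bs ! j"
    using path_decomp_covers_edge[OF pd e] by (auto simp: in_set_conv_nth)
  show ?thesis
  proof (cases "j \<le> i")
    case True
    with j show ?thesis unfolding mem_bags_upto by auto
  next
    case False
    have "x \<notin> bags_upto bs i" if "x \<in> bs ! j" "x \<notin> bs ! i" for x
    proof
      assume "x \<in> bags_upto bs i"
      then obtain j' where "j' \<le> i" "x \<in> bs ! j'"
        unfolding mem_bags_upto by auto
      with path_decomp_interval[OF pd _ _ j(1)] False that show False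
        by (meson nat_le_linear)
    qed
    with j assms(4,5) show ?thesis by auto
  qed
qed

lemma connected_set_avoiding_bag:
  assumes pd: "path_decomp H bs" and i: "i < length bs"
    and conn: "connected_set H S" and avoid: "S \<inter> bs ! i = {}"
    and meet: "S \<inter> bags_upto bs i \<noteq> {}"
  shows "S \<subseteq> bags_upto bs i"
proof -
  let ?R = "\<lambda>a b. a \<in> S \<and> b \<in> S \<and> {a, b} \<in> edges H"
  obtain c where c: "\<And>z. z \<in> S \<Longrightarrow> ?R\<^sup>*\<^sup>* c z"
    using conn unfolding connected_set_def by blast
  have walk: "c \<in> bags_upto bs i \<longleftrightarrow> z \<in> bags_upto bs i" if "?R\<^sup>*\<^sup>* c z" for z
    using that
  proof (induction rule: rtranclp_induct)
    case (step y z)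
    then have "{y, z} \<in> edges H" "y \<notin> bs ! i" "z \<notin> bs ! i"
      using avoid by blast+
    with step.IH bags_upto_edge_avoiding_bag[OF pd i] show ?case by simp
  qed simp
  from meet obtain z0 where "z0 \<in> S" "z0 \<in> bags_upto bs i" by blast
  with c walk have "c \<in> bags_upto bs i" by blast
  with c walk show ?thesis by blast
qed

lemma connected_set_meets_first_bag:
  assumes pd: "path_decomp H bs" and i: "i < length bs"
    and conn: "connected_set H S" and meet: "S \<inter> bags_upto bs i \<noteq> {}"
    and first: "\<And>j. j < i \<Longrightarrow> \<not> S \<subseteq> bags_upto bs j"
  shows "S \<inter> bs ! i \<noteq> {}"
proof
  assume avoid: "S \<inter> bs ! i = {}"
  then have S: "S \<subseteq> bags_upto bs i"
    using connected_set_avoiding_bag[OF pd i conn _ meet] by blast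
  show False
  proof (cases "i = 0")
    case True
    with S avoid meet bags_upto_0[of bs] show False by blast
  next
    case False
    with S avoid bags_upto_diff_bag[of i bs] have "S \<subseteq> bags_upto bs (i - 1)" by blast
    with first[of "i - 1"] False show False by simp
  qed
qed

lemma card_le_card_if_disjoint_family_meets:
  assumes "finite X" "disjoint_family_on C B" "\<And>y. y \<in> B \<Longrightarrow> C y \<inter> X \<noteq> {}"
  shows "card B \<le> card X"
proof -
  define g where "g y = (SOME z. z \<in> C y \<inter> X)" for y
  have g: "g y \<in> C y \<inter> X" if "y \<in> B" for y
    unfolding g_def by (rule someI_ex) (use assms(3)[OF that] in blast)
  have "inj_on g B"
    using g assms(2) by (fastforce simp: inj_on_def disjoint_family_on_def)
  with g assms(1) show ?thesis
    by (intro card_inj_on_le[of g]) auto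
qed

text \<open>The first bag i for which bags_upto bs i contains a whole row (or column) meets
  every column (or row).\<close>
lemma grid_min_card_le_bag:
  fixes R :: "'i \<Rightarrow> 'a set" and C :: "'j \<Rightarrow> 'a set"
  assumes H: "wf_graph H" and pd: "path_decomp H bs"
    and A: "A \<noteq> {}" "\<And>x. x \<in> A \<Longrightarrow> R x \<subseteq> verts H"
    and conn: "\<And>x. x \<in> A \<Longrightarrow> connected_set H (R x)" "\<And>y. y \<in> B \<Longrightarrow> connected_set H (C y)"
    and meet: "\<And>x y. x \<in> A \<Longrightarrow> y \<in> B \<Longrightarrow> R x \<inter> C y \<noteq> {}"
    and disj: "disjoint_family_on R A" "disjoint_family_on C B"
  shows "\<exists>X\<in>set bs. min (card A) (card B) \<le> card X"
proof -
  define P where "P j \<longleftrightarrow> (\<exists>x\<in>A. R x \<subseteq> bags_upto bs j) \<or> (\<exists>y\<in>B. C y \<subseteq> bags_upto bs j)" for j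
  have "P (length bs - 1)"
    using A verts_subset_bags_upto_last[OF pd] unfolding P_def by blast
  define i where "i = (LEAST j. P j)"
  have Pi: "P i" unfolding i_def by (rule LeastI) fact
  have "i \<le> length bs - 1" unfolding i_def by (rule Least_le) fact
  moreover have "length bs > 0" using path_decomp_nonempty[OF pd] by simp
  ultimately have i: "i < length bs" by linarith
  have first: "\<not> P j" if "j < i" for j
    using not_less_Least[OF that[unfolded i_def]] by (simp add: i_def)
  have fin: "finite (bs ! i)"
    using path_decomp_bag_finite[OF H pd] i by simp
  from Pi consider x where "x \<in> A" "R x \<subseteq> bags_upto bs i" | y where "y \<in> B" "C y \<subseteq> bags_upto bs i"
    unfolding P_def by blast
  then have "min (card A) (card B) \<le> card (bs ! i)"
  proof cases
    case (1 x)
    have "C y \<inter> bs ! i \<noteq> {}" if "y \<in> B" for y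
      using connected_set_meets_first_bag[OF pd i conn(2)[OF that]] meet[OF 1(1) that] 1(2) first
        that unfolding P_def by blast
    then have "card B \<le> card (bs ! i)"
      by (rule card_le_card_if_disjoint_family_meets[OF fin disj(2)])
    then show ?thesis by simp
  next
    case (2 y)
    have "R x \<inter> bs ! i \<noteq> {}" if "x \<in> A" for x
      using connected_set_meets_first_bag[OF pd i conn(1)[OF that]] meet[OF that 2(1)] 2(2) first
        that unfolding P_def by blast
    then have "card A \<le> card (bs ! i)"
      by (rule card_le_card_if_disjoint_family_meets[OF fin disj(1)])
    then show ?thesis by simp
  qed
  with i show ?thesis by auto
qed

lemma min_card_components_le_pathwidth_cartesian_prod:
  assumes G1: "wf_graph G1" and G2: "wf_graph G2" and "v1 \<in> verts G1" "v2 \<in> verts G2"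
  shows "min (card (component G1 v1)) (card (component G2 v2))
           \<le> pathwidth (cartesian_prod G1 G2) + 1"
proof -
  let ?H = "cartesian_prod G1 G2"
  define S1 where "S1 = component G1 v1"
  define S2 where "S2 = component G2 v2"
  have S: "S1 \<subseteq> verts G1" "S2 \<subseteq> verts G2" "v1 \<in> S1"
    unfolding S1_def S2_def by (simp_all add: component_subset in_component_self assms(3))
  have H: "wf_graph ?H"
    using G1 G2 by (rule wf_graph_cartesian_prod)
  obtain bs where bs: "path_decomp ?H bs" "decomp_width bs = pathwidth ?H"
    using pathwidth_attained[OF H] .
  have "\<exists>X\<in>set bs. min (card S1) (card S2) \<le> card X"
  proof (rule grid_min_card_le_bag[OF H bs(1), where R = "\<lambda>x. {x} \<times> S2" and C = "\<lambda>y. S1 \<times> {y}"])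
    show "S1 \<noteq> {}" using S(3) by blast
    show "{x} \<times> S2 \<subseteq> verts ?H" if "x \<in> S1" for x
      using that S(1,2) by (simp add: cartesian_prod_def subset_iff)
    show "connected_set ?H ({x} \<times> S2)" if "x \<in> S1" for x
      unfolding S2_def by (rule connected_set_cartesian_prod_row[OF G2]) (use that S(1) in blast)
    show "connected_set ?H (S1 \<times> {y})" if "y \<in> S2" for y
      unfolding S1_def by (rule connected_set_cartesian_prod_column[OF G1]) (use that S(2) in blast)
    show "({x} \<times> S2) \<inter> (S1 \<times> {y}) \<noteq> {}" if "x \<in> S1" "y \<in> S2" for x y
      using that by blast
    show "disjoint_family_on (\<lambda>x. {x} \<times> S2) S1" "disjoint_family_on (\<lambda>y. S1 \<times> {y}) S2"
      unfolding disjoint_family_on_def by blast+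
  qed
  then obtain X where "X \<in> set bs" "min (card S1) (card S2) \<le> card X" ..
  with card_bag_le_decomp_width[of X bs] bs(2) show ?thesis
    unfolding S1_def S2_def by linarith
qed

subsection \<open>Path decompositions of the strong product\<close>

definition grid_bags :: "'a set list \<Rightarrow> 'b set list \<Rightarrow> ('a \<times> 'b) set list" where
  "grid_bags bs Ks =
     map (\<lambda>t. bs ! (t mod length bs) \<times> Ks ! (t div length bs)) [0..<length bs * length Ks]"

lemma length_grid_bags: "length (grid_bags bs Ks) = length bs * length Ks"
  by (simp add: grid_bags_def)

lemma nth_grid_bags:
  "t < length bs * length Ks \<Longrightarrow> grid_bags bs Ks ! t = bs ! (t mod length bs) \<times> Ks ! (t div length bs)"
  by (simp add: grid_bags_def)

lemma grid_bags_index: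
  assumes "j < length bs" "p < length Ks"
  shows "p * length bs + j < length bs * length Ks"
    and "grid_bags bs Ks ! (p * length bs + j) = bs ! j \<times> Ks ! p"
proof -
  have "p * length bs + j < (p + 1) * length bs" using assms(1) by simp
  also have "\<dots> \<le> length Ks * length bs" using assms(2) by (intro mult_le_mono1) simp
  finally show *: "p * length bs + j < length bs * length Ks" by (simp add: mult.commute)
  have "(p * length bs + j) div length bs = p"
    using assms(1) by (metis add.commute div_less div_mult_self1 add_0_right gr_implies_not0)
  moreover have "(p * length bs + j) mod length bs = j"
    using assms(1) by simp
  ultimately show "grid_bags bs Ks ! (p * length bs + j) = bs ! j \<times> Ks ! p"
    using nth_grid_bags[OF *] by simp
qed

lemma set_grid_bags:
  assumes "bs \<noteq> []"
  shows "set (grid_bags bs Ks) = {B \<times> K | B K. B \<in> set bs \<and> K \<in> set Ks}"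
proof (intro equalityI subsetI)
  fix X assume "X \<in> set (grid_bags bs Ks)"
  then obtain t where t: "t < length bs * length Ks" "X = grid_bags bs Ks ! t"
    by (auto simp: in_set_conv_nth length_grid_bags)
  have "t mod length bs < length bs" "t div length bs < length Ks"
    using assms t(1) by (simp_all add: less_mult_imp_div_less mult.commute)
  with t nth_grid_bags show "X \<in> {B \<times> K | B K. B \<in> set bs \<and> K \<in> set Ks}"
    by fastforce
next
  fix X assume "X \<in> {B \<times> K | B K. B \<in> set bs \<and> K \<in> set Ks}"
  then obtain j p where "j < length bs" "p < length Ks" "X = bs ! j \<times> Ks ! p"
    by (auto simp: in_set_conv_nth)
  with grid_bags_index show "X \<in> set (grid_bags bs Ks)"
    by (metis length_grid_bags nth_mem)
qed

text \<open>Because the sets in Ks are disjoint, a vertex of the grid occurs in only one block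
  of consecutive bags, and there it follows the interval property of bs.\<close>
lemma grid_bags_interval:
  assumes pd: "path_decomp G bs" and Ks: "distinct Ks" "disjoint (set Ks)"
    and ijk: "i \<le> j" "j \<le> k" "k < length (grid_bags bs Ks)"
    and x: "x \<in> grid_bags bs Ks ! i" "x \<in> grid_bags bs Ks ! k"
  shows "x \<in> grid_bags bs Ks ! j"
proof -
  define m where "m = length bs"
  have m: "0 < m" using path_decomp_nonempty[OF pd] by (simp add: m_def)
  have lt: "i < m * length Ks" "j < m * length Ks" "k < m * length Ks"
    using ijk by (simp_all add: length_grid_bags m_def)
  obtain a y where xay: "x = (a, y)" by force
  have a: "a \<in> bs ! (i mod m)" "a \<in> bs ! (k mod m)"
    and y: "y \<in> Ks ! (i div m)" "y \<in> Ks ! (k div m)"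
    using x lt nth_grid_bags[of _ bs Ks] by (simp_all add: xay m_def)
  have "i div m < length Ks" "k div m < length Ks"
    using lt by (simp_all add: less_mult_imp_div_less mult.commute)
  with y Ks have ik: "i div m = k div m"
    by (metis disjnt_iff nth_eq_iff_index_eq nth_mem pairwiseD)
  moreover have "i div m \<le> j div m" "j div m \<le> k div m"
    using ijk by (simp_all add: div_le_mono)
  ultimately have jk: "j div m = k div m" by simp
  have "i mod m \<le> j mod m" "j mod m \<le> k mod m"
    using ijk ik jk by (metis div_mult_mod_eq add_le_cancel_left)+
  then have "a \<in> bs ! (j mod m)"
    using path_decomp_interval[OF pd _ _ _ a] m by (simp add: m_def)
  with y(2) jk show ?thesis
    using nth_grid_bags[of j bs Ks] lt(2) by (simp add: xay m_def)
qed

lemma disjoint_components: "disjoint (insert {} (component G ` verts G))"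
  by (auto simp: pairwise_def disjnt_def dest: component_eq)

lemma strong_prod_edge_subset_bag_times_component:
  assumes G2: "wf_graph G2" and pd: "path_decomp G1 bs" and "e \<in> edges (strong_prod G1 G2)"
  obtains B v where "B \<in> set bs" "v \<in> verts G2" "e \<subseteq> B \<times> component G2 v"
proof -
  obtain a b u v where e: "e = {(a, v), (b, u)}" "a \<in> verts G1" "v \<in> verts G2"
    "a = b \<or> {a, b} \<in> edges G1" "u = v \<or> {u, v} \<in> edges G2"
    using assms(3) by (elim strong_prod_edgeE) blast
  have "\<exists>B\<in>set bs. {a, b} \<subseteq> B"
  proof (cases "a = b")
    case True
    with path_decomp_covers_vertex[OF pd e(2)] show ?thesis by simp
  next
    case False
    with path_decomp_covers_edge[OF pd] e(4) show ?thesis by blast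
  qed
  then obtain B where B: "B \<in> set bs" "{a, b} \<subseteq> B" ..
  have v: "v \<in> component G2 v"
    using e(3) by (rule in_component_self)
  have "u \<in> component G2 v"
  proof (cases "u = v")
    case False
    with e(5) have "{v, u} \<in> edges G2" by (simp add: insert_commute)
    then show ?thesis by (rule component_edge_closed[OF G2 _ v])
  qed (use v in simp)
  with e(1) B v have "e \<subseteq> B \<times> component G2 v" by simp
  with that B(1) e(3) show thesis by blast
qed

lemma path_decomp_strong_prod_grid_bags:
  assumes G2: "wf_graph G2" and pd: "path_decomp G1 bs"
    and Ks: "set Ks = insert {} (component G2 ` verts G2)" "distinct Ks"
  shows "path_decomp (strong_prod G1 G2) (grid_bags bs Ks)"
proof -
  have bs: "bs \<noteq> []" using path_decomp_nonempty[OF pd] .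
  have comp: "component G2 v \<in> set Ks" if "v \<in> verts G2" for v
    using that unfolding Ks(1) by blast
  show ?thesis
    unfolding path_decomp_def
  proof (intro conjI ballI allI impI)
    show "grid_bags bs Ks \<noteq> []"
      using bs Ks(1) by (simp add: grid_bags_def) (metis empty_iff empty_set insertI1)
  next
    fix X assume "X \<in> set (grid_bags bs Ks)"
    then obtain B K where X: "X = B \<times> K" "B \<in> set bs" "K \<in> set Ks"
      unfolding set_grid_bags[OF bs] by blast
    have "B \<subseteq> verts G1"
      using path_decomp_bag_subset[OF pd X(2)] .
    moreover have "K \<subseteq> verts G2"
      using X(3) component_subset[of G2] unfolding Ks(1) by blast
    ultimately show "X \<subseteq> verts (strong_prod G1 G2)"
      unfolding X(1) by (simp add: strong_prod_def Sigma_mono)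
  next
    fix x assume "x \<in> verts (strong_prod G1 G2)"
    then obtain a v where x: "x = (a, v)" "a \<in> verts G1" "v \<in> verts G2"
      by (auto simp: strong_prod_def)
    obtain B where B: "B \<in> set bs" "a \<in> B"
      using path_decomp_covers_vertex[OF pd x(2)] by blast
    have "B \<times> component G2 v \<in> set (grid_bags bs Ks)"
      unfolding set_grid_bags[OF bs] using B(1) comp[OF x(3)] by blast
    moreover have "x \<in> B \<times> component G2 v"
      using x B(2) in_component_self by simp
    ultimately show "\<exists>X\<in>set (grid_bags bs Ks). x \<in> X" ..
  next
    fix e assume "e \<in> edges (strong_prod G1 G2)"
    then obtain B v where "B \<in> set bs" "v \<in> verts G2" "e \<subseteq> B \<times> component G2 v"
      by (rule strong_prod_edge_subset_bag_times_component[OF G2 pd])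
    moreover have "B \<times> component G2 v \<in> set (grid_bags bs Ks)"
      unfolding set_grid_bags[OF bs] using calculation(1) comp[OF calculation(2)] by blast
    ultimately show "\<exists>X\<in>set (grid_bags bs Ks). e \<subseteq> X" by blast
  next
    fix x i j k
    assume "i \<le> j \<and> j \<le> k \<and> k < length (grid_bags bs Ks) \<and>
      x \<in> grid_bags bs Ks ! i \<and> x \<in> grid_bags bs Ks ! k"
    moreover have "disjoint (set Ks)"
      unfolding Ks(1) by (rule disjoint_components)
    ultimately show "x \<in> grid_bags bs Ks ! j"
      using grid_bags_interval[OF pd Ks(2)] by blast
  qed
qed

lemma pathwidth_strong_prod_le:
  assumes G1: "wf_graph G1" and G2: "wf_graph G2"
    and c: "\<And>v. v \<in> verts G2 \<Longrightarrow> card (component G2 v) \<le> c"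
  shows "pathwidth (strong_prod G1 G2) \<le> (pathwidth G1 + 1) * c"
proof -
  obtain bs where bs: "path_decomp G1 bs" "decomp_width bs = pathwidth G1"
    using pathwidth_attained[OF G1] .
  \<comment> \<open>The empty set keeps the list nonempty when G2 has no vertices.\<close>
  obtain Ks where Ks: "set Ks = insert {} (component G2 ` verts G2)" "distinct Ks"
    using finite_distinct_list wf_graph_finite[OF G2] by (metis finite.insertI finite_imageI)
  have pd: "path_decomp (strong_prod G1 G2) (grid_bags bs Ks)"
    by (rule path_decomp_strong_prod_grid_bags[OF G2 bs(1) Ks])
  have "decomp_width (grid_bags bs Ks) \<le> (pathwidth G1 + 1) * c - 1"
  proof (rule decomp_width_le)
    show "grid_bags bs Ks \<noteq> []" using pd by (rule path_decomp_nonempty)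
  next
    fix X assume "X \<in> set (grid_bags bs Ks)"
    then obtain B K where X: "X = B \<times> K" "B \<in> set bs" "K \<in> set Ks"
      unfolding set_grid_bags[OF path_decomp_nonempty[OF bs(1)]] by blast
    have "card B \<le> pathwidth G1 + 1"
      using card_bag_le_decomp_width[OF X(2)] bs(2) by simp
    moreover have "card K \<le> c"
      using X(3) c unfolding Ks(1) by auto
    ultimately have "card X \<le> (pathwidth G1 + 1) * c"
      unfolding X(1) card_cartesian_product by (rule mult_le_mono)
    then show "card X \<le> (pathwidth G1 + 1) * c - 1 + 1"
      by linarith
  qed
  with pathwidth_le[OF pd] show ?thesis by linarith
qed

lemma graph_class_wf_graph: "graph_class C \<Longrightarrow> G \<in> C \<Longrightarrow> wf_graph G"
  unfolding graph_class_def by blast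

lemma graph_class_nonemptyE:
  assumes "graph_class C"
  obtains G v where "G \<in> C" "v \<in> verts G"
  using assms unfolding graph_class_def by blast

lemma bounded_pathwidth_class_prod_iff:
  "bounded_pathwidth (class_prod p C1 C2) \<longleftrightarrow> (\<exists>k. \<forall>G1\<in>C1. \<forall>G2\<in>C2. pathwidth (p G1 G2) \<le> k)"
  unfolding bounded_pathwidth_def class_prod_def by blast

lemma bounded_pathwidth_cartesian_if_strong:
  assumes "graph_class C1" "graph_class C2"
    and "bounded_pathwidth (class_prod strong_prod C1 C2)"
  shows "bounded_pathwidth (class_prod cartesian_prod C1 C2)"
proof -
  obtain k where k: "\<And>G1 G2. G1 \<in> C1 \<Longrightarrow> G2 \<in> C2 \<Longrightarrow> pathwidth (strong_prod G1 G2) \<le> k"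
    using assms(3) unfolding bounded_pathwidth_class_prod_iff by blast
  have "pathwidth (cartesian_prod G1 G2) \<le> k" if "G1 \<in> C1" "G2 \<in> C2" for G1 G2
    using pathwidth_cartesian_prod_le_strong_prod k[OF that]
      graph_class_wf_graph[OF assms(1) that(1)] graph_class_wf_graph[OF assms(2) that(2)]
    by (meson le_trans)
  then show ?thesis
    unfolding bounded_pathwidth_class_prod_iff by blast
qed

lemma bounded_pathwidth_left_if_cartesian:
  assumes "graph_class C1" "graph_class C2"
    and "bounded_pathwidth (class_prod cartesian_prod C1 C2)"
  shows "bounded_pathwidth C1"
proof -
  obtain k where k: "\<And>G1 G2. G1 \<in> C1 \<Longrightarrow> G2 \<in> C2 \<Longrightarrow> pathwidth (cartesian_prod G1 G2) \<le> k"
    using assms(3) unfolding bounded_pathwidth_class_prod_iff by blast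
  obtain G2 v where G2: "G2 \<in> C2" "v \<in> verts G2"
    using assms(2) by (rule graph_class_nonemptyE)
  have "pathwidth G1 \<le> k" if "G1 \<in> C1" for G1
    using pathwidth_le_cartesian_prod_left[OF _ _ G2(2)] k[OF that G2(1)]
      graph_class_wf_graph[OF assms(1) that] graph_class_wf_graph[OF assms(2) G2(1)]
    by (meson le_trans)
  then show ?thesis
    unfolding bounded_pathwidth_def by blast
qed

lemma bounded_pathwidth_right_if_cartesian:
  assumes "graph_class C1" "graph_class C2"
    and "bounded_pathwidth (class_prod cartesian_prod C1 C2)"
  shows "bounded_pathwidth C2"
proof -
  obtain k where k: "\<And>G1 G2. G1 \<in> C1 \<Longrightarrow> G2 \<in> C2 \<Longrightarrow> pathwidth (cartesian_prod G1 G2) \<le> k"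
    using assms(3) unfolding bounded_pathwidth_class_prod_iff by blast
  obtain G1 v where G1: "G1 \<in> C1" "v \<in> verts G1"
    using assms(1) by (rule graph_class_nonemptyE)
  have "pathwidth G2 \<le> k" if "G2 \<in> C2" for G2
    using pathwidth_le_cartesian_prod_right[OF _ _ G1(2)] k[OF G1(1) that]
      graph_class_wf_graph[OF assms(1) G1(1)] graph_class_wf_graph[OF assms(2) that]
    by (meson le_trans)
  then show ?thesis
    unfolding bounded_pathwidth_def by blast
qed

lemma bounded_comp_size_if_cartesian:
  assumes "graph_class C1" "graph_class C2"
    and "bounded_pathwidth (class_prod cartesian_prod C1 C2)"
  shows "bounded_comp_size C1 \<or> bounded_comp_size C2"
proof (rule ccontr)
  obtain k where k: "\<And>G1 G2. G1 \<in> C1 \<Longrightarrow> G2 \<in> C2 \<Longrightarrow> pathwidth (cartesian_prod G1 G2) \<le> k"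
    using assms(3) unfolding bounded_pathwidth_class_prod_iff by blast
  assume "\<not> (bounded_comp_size C1 \<or> bounded_comp_size C2)"
  then obtain G1 G2 where G: "G1 \<in> C1" "G2 \<in> C2"
    and "\<not> max_comp_size G1 \<le> k + 1" "\<not> max_comp_size G2 \<le> k + 1"
    unfolding bounded_comp_size_def by blast
  moreover have wf: "wf_graph G1" "wf_graph G2"
    using G graph_class_wf_graph assms(1,2) by blast+
  ultimately obtain v1 v2 where v: "v1 \<in> verts G1" "v2 \<in> verts G2"
    and "k + 1 < card (component G1 v1)" "k + 1 < card (component G2 v2)"
    unfolding max_comp_size_le_iff[OF wf(1)] max_comp_size_le_iff[OF wf(2)] by (auto simp: not_le)
  with min_card_components_le_pathwidth_cartesian_prod[OF wf v] k[OF G] show False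
    by linarith
qed

lemma bounded_pathwidth_strong_if:
  assumes "graph_class C1" "graph_class C2"
    and "bounded_pathwidth C1" "bounded_pathwidth C2"
    and "bounded_comp_size C1 \<or> bounded_comp_size C2"
  shows "bounded_pathwidth (class_prod strong_prod C1 C2)"
  using assms(5)
proof
  assume "bounded_comp_size C2"
  then obtain c where c: "\<And>G2. G2 \<in> C2 \<Longrightarrow> max_comp_size G2 \<le> c"
    unfolding bounded_comp_size_def by blast
  obtain k where k: "\<And>G1. G1 \<in> C1 \<Longrightarrow> pathwidth G1 \<le> k"
    using assms(3) unfolding bounded_pathwidth_def by blast
  have "pathwidth (strong_prod G1 G2) \<le> (k + 1) * c" if G: "G1 \<in> C1" "G2 \<in> C2" for G1 G2
  proof -
    have wf: "wf_graph G1" "wf_graph G2"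
      using G graph_class_wf_graph assms(1,2) by blast+
    have "pathwidth (strong_prod G1 G2) \<le> (pathwidth G1 + 1) * c"
      using c[OF G(2)] unfolding max_comp_size_le_iff[OF wf(2)]
      by (intro pathwidth_strong_prod_le[OF wf]) blast
    also have "\<dots> \<le> (k + 1) * c"
      using k[OF G(1)] by simp
    finally show ?thesis .
  qed
  then show ?thesis
    unfolding bounded_pathwidth_class_prod_iff by blast
next
  assume "bounded_comp_size C1"
  then obtain c where c: "\<And>G1. G1 \<in> C1 \<Longrightarrow> max_comp_size G1 \<le> c"
    unfolding bounded_comp_size_def by blast
  obtain k where k: "\<And>G2. G2 \<in> C2 \<Longrightarrow> pathwidth G2 \<le> k"
    using assms(4) unfolding bounded_pathwidth_def by blast
  have "pathwidth (strong_prod G1 G2) \<le> (k + 1) * c" if G: "G1 \<in> C1" "G2 \<in> C2" for G1 G2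
  proof -
    have wf: "wf_graph G1" "wf_graph G2"
      using G graph_class_wf_graph assms(1,2) by blast+
    have "pathwidth (strong_prod G1 G2) = pathwidth (strong_prod G2 G1)"
      by (rule pathwidth_strong_prod_commute[OF wf])
    also have "\<dots> \<le> (pathwidth G2 + 1) * c"
      using c[OF G(1)] unfolding max_comp_size_le_iff[OF wf(1)]
      by (intro pathwidth_strong_prod_le[OF wf(2,1)]) blast
    also have "\<dots> \<le> (k + 1) * c"
      using k[OF G(2)] by simp
    finally show ?thesis .
  qed
  then show ?thesis
    unfolding bounded_pathwidth_class_prod_iff by blast
qed

theorem mainTheorem14:
  fixes C1 C2 :: "nat graph set"
  assumes "monotone_class C1" and "monotone_class C2"
  shows "(bounded_pathwidth (class_prod strong_prod C1 C2)
            \<longleftrightarrow> bounded_pathwidth (class_prod cartesian_prod C1 C2))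
       \<and> (bounded_pathwidth (class_prod cartesian_prod C1 C2)
            \<longleftrightarrow> (bounded_pathwidth C1 \<and> bounded_pathwidth C2 \<and>
                 (bounded_comp_size C1 \<or> bounded_comp_size C2)))"
proof -
  have C: "graph_class C1" "graph_class C2"
    using assms unfolding monotone_class_def by blast+
  show ?thesis
    using bounded_pathwidth_cartesian_if_strong[OF C] bounded_pathwidth_strong_if[OF C]
      bounded_pathwidth_left_if_cartesian[OF C] bounded_pathwidth_right_if_cartesian[OF C]
      bounded_comp_size_if_cartesian[OF C]
    by blast
qed

end
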